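(* Let $g\colon\mathbb X\to\mathbb Y$ be continuous, let $D\subset\mathbb Y$ be nonempty and closed, and let $\Phi\colon\mathbb X\rightrightarrows\mathbb Y$ be given by $\Phi(x):=g(x)-D$ for all $x\in\mathbb X$. Fix $(x,y)\in\operatorname{gph}\Phi$. Then: (i) For each $y^*\in\mathbb Y$, \[\widehat D^*\Phi(x,y)(y^* )\subset\begin{cases}\widehat D^*g(x)(y^* )& \text{if } y^*\in\widehat{\mathcal N}_D(g(x)-y),\\ \varnothing&\text{otherwise},\end{cases}\] and the opposite inclusion holds if $g$ is calm at $x$. (ii) For each $y^*\in\mathbb Y$, \[D^*\Phi(x,y)(y^* )\subset\begin{cases}D^*g(x)(y^* )& \text{if } y^*\in\mathcal N_D(g(x)-y),\\ \varnothing&\text{otherwise}.\end{cases}\] (iii) If $g$ is calm at $x$, then for each pair of directions $(u,v)\in\mathbb X\times\mathbb Y$ and each $y^*\in\mathbb Y$, $D^*\Phi((x,y);(u,v))(y^* )$ is contained in the union, over all $w\in Dg(x)(u)$ with $y^*\in\mathcal N_D(g(x)-y;w-v)$, of the sets $D^*g(x;(u,w))(y^* )$ (and is empty if no such $w$ exists).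
   Context: $\mathbb X,\mathbb Y$ are Euclidean spaces. For a closed set $Q$ and $\bar z\in Q$, $\widehat{\mathcal N}_Q(\bar z)=\{\eta\mid \langle\eta,z-\bar z\rangle\le o(\|z-\bar z\|)\ \forall z\in Q\}$ is the regular normal cone, $\mathcal N_Q(\bar z)$ the limiting normal cone (limits of $\eta_k\in\widehat{\mathcal N}_Q(z_k)$ with $Q\ni z_k\to\bar z$); both are empty for $\bar z\notin Q$. For a direction $w$, the directional limiting normal cone $\mathcal N_Q(\bar z;w)$ is the set of all $\eta$ for which there exist $w_k\to w$, $t_k\searrow0$, $\eta_k\to\eta$ with $\eta_k\in\widehat{\mathcal N}_Q(\bar z+t_kw_k)$ for all $k$. For a set-valued map $\Psi$ with closed graph and $(\bar x,\bar y)\in\operatorname{gph}\Psi$: $\widehat D^*\Psi(\bar x,\bar y)(y^* )=\{x^*\mid(x^*,-y^* )\in\widehat{\mathcal N}_{\operatorname{gph}\Psi}(\bar x,\bar y)\}$ (regular coderivative), $D^*\Psi(\bar x,\bar y)(y^* )=\{x^*\mid(x^*,-y^* )\in\mathcal N_{\operatorname{gph}\Psi}(\bar x,\bar y)\}$ (limiting coderivative), and $D^*\Psi((\bar x,\bar y);(u,v))(y^* )=\{x^*\mid(x^*,-y^* )\in\mathcal N_{\operatorname{gph}\Psi}((\bar x,\bar y);(u,v))\}$ (directional limiting coderivative). For single-valued $g$ one writes $\widehat D^*g(x)$, $D^*g(x)$, $D^*g(x;(u,w))$. The graphical derivative $Dg(x)(u)$ is the set of $w$ with $(u,w)$ in the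 (Bouligand) tangent cone to $\operatorname{gph}g$ at $(x,g(x))$. $g$ is calm at $x$ if there are a neighbourhood $U$ of $x$ and $L>0$ with $\|g(x')-g(x)\|\le L\|x'-x\|$ for all $x'\in U$. *)

theory Defs
  imports "HOL-Analysis.Analysis"
begin

definition reg_normal :: "'a::euclidean_space set \<Rightarrow> 'a \<Rightarrow> 'a set" where
  "reg_normal Q zb = {\<eta>. zb \<in> Q \<and>
     (\<forall>\<epsilon>>0. \<exists>\<delta>>0. \<forall>z\<in>Q. norm (z - zb) < \<delta> \<longrightarrow> \<eta> \<bullet> (z - zb) \<le> \<epsilon> * norm (z - zb))}"

definition lim_normal :: "'a::euclidean_space set \<Rightarrow> 'a \<Rightarrow> 'a set" where
  "lim_normal Q zb = {\<eta>. zb \<in> Q \<and> (\<exists>z e. (\<forall>k. z k \<in> Q \<and> e k \<in> reg_normal Q (z k))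
       \<and> z \<longlonglongrightarrow> zb \<and> e \<longlonglongrightarrow> \<eta>)}"

definition dir_normal :: "'a::euclidean_space set \<Rightarrow> 'a \<Rightarrow> 'a \<Rightarrow> 'a set" where
  "dir_normal Q zb w = {\<eta>. \<exists>ws t e. ws \<longlonglongrightarrow> w \<and> (\<forall>k. t k > 0) \<and> t \<longlonglongrightarrow> 0
       \<and> e \<longlonglongrightarrow> \<eta> \<and> (\<forall>k. e k \<in> reg_normal Q (zb + t k *\<^sub>R ws k))}"

definition tangent_cone :: "'a::euclidean_space set \<Rightarrow> 'a \<Rightarrow> 'a set" where
  "tangent_cone Q zb = {d. \<exists>t ds. (\<forall>k. t k > 0) \<and> t \<longlonglongrightarrow> 0 \<and> ds \<longlonglongrightarrow> d
       \<and> (\<forall>k. zb + t k *\<^sub>R ds k \<in> Q)}"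

definition gph :: "('a \<Rightarrow> 'b set) \<Rightarrow> ('a \<times> 'b) set" where
  "gph \<Psi> = {(x, y). y \<in> \<Psi> x}"

definition reg_coderiv :: "('a::euclidean_space \<Rightarrow> 'b::euclidean_space set) \<Rightarrow> 'a \<Rightarrow> 'b \<Rightarrow> 'b \<Rightarrow> 'a set" where
  "reg_coderiv \<Psi> x y ys = {xs. (xs, - ys) \<in> reg_normal (gph \<Psi>) (x, y)}"

definition lim_coderiv :: "('a::euclidean_space \<Rightarrow> 'b::euclidean_space set) \<Rightarrow> 'a \<Rightarrow> 'b \<Rightarrow> 'b \<Rightarrow> 'a set" where
  "lim_coderiv \<Psi> x y ys = {xs. (xs, - ys) \<in> lim_normal (gph \<Psi>) (x, y)}"

definition dir_coderiv :: "('a::euclidean_space \<Rightarrow> 'b::euclidean_space set) \<Rightarrow> 'a \<Rightarrow> 'b \<Rightarrow> 'a \<Rightarrow> 'b \<Rightarrow> 'b \<Rightarrow> 'a set" where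
  "dir_coderiv \<Psi> x y u v ys = {xs. (xs, - ys) \<in> dir_normal (gph \<Psi>) (x, y) (u, v)}"

text \<open>Single-valued versions, via the map x \<mapsto> {g x}.\<close>
definition sv :: "('a \<Rightarrow> 'b) \<Rightarrow> 'a \<Rightarrow> 'b set" where
  "sv g = (\<lambda>x. {g x})"

definition graph_deriv :: "('a::euclidean_space \<Rightarrow> 'b::euclidean_space) \<Rightarrow> 'a \<Rightarrow> 'a \<Rightarrow> 'b set" where
  "graph_deriv g x u = {w. (u, w) \<in> tangent_cone (gph (sv g)) (x, g x)}"

definition calm_at :: "('a::real_normed_vector \<Rightarrow> 'b::real_normed_vector) \<Rightarrow> 'a \<Rightarrow> bool" where
  "calm_at g x \<longleftrightarrow> (\<exists>U L. open U \<and> x \<in> U \<and> L > 0 \<and> (\<forall>x'\<in>U. norm (g x' - g x) \<le> L * norm (x' - x)))"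

end

theory Submission
  imports Defs
begin

text \<open>
  The graph of \<open>\<Phi>\<close> is the preimage of \<open>D\<close> under \<open>(a, b) \<mapsto> g a - b\<close>. Regular normals to
  \<open>gph \<Phi>\<close> at \<open>(p, q)\<close> pull back along the isometric embeddings \<open>d \<mapsto> (p, g p - d)\<close> of \<open>D\<close> and
  \<open>z \<mapsto> z - (0, g p - q)\<close> of \<open>gph g\<close>, which gives the inclusions with no assumption on \<open>g\<close>.
  Conversely, if \<open>g\<close> is calm then so are \<open>(a, b) \<mapsto> (a, g a)\<close> and \<open>(a, b) \<mapsto> g a - b\<close>, and the
  \<open>o(\<parallel>\<cdot>\<parallel>)\<close> estimates of a normal to \<open>D\<close> and of a normal to \<open>gph g\<close> pulled back along them add
  up to the estimate for \<open>gph \<Phi>\<close>. Limiting and directional normals follow by applying the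
  pointwise result along the approximating sequences; in the directional case calmness bounds
  the difference quotients of \<open>g\<close>, and a convergent subsequence produces \<open>w \<in> Dg(x)(u)\<close>.
\<close>

lemma mem_gph_sv_iff: "(a, b) \<in> gph (sv g) \<longleftrightarrow> b = g a"
  by (simp add: gph_def sv_def)

lemma mem_gph_diff_iff:
  fixes g :: "'a \<Rightarrow> 'b::ab_group_add"
  assumes "\<And>x. \<Phi> x = (\<lambda>d. g x - d) ` D"
  shows "(a, b) \<in> gph \<Phi> \<longleftrightarrow> g a - b \<in> D"
  by (auto simp: gph_def assms image_iff intro: bexI[of _ "g a - b"])

definition upper_little_o :: "('a::real_normed_vector \<Rightarrow> real) \<Rightarrow> 'a set \<Rightarrow> 'a \<Rightarrow> bool" where
  "upper_little_o \<phi> S zb \<longleftrightarrow>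
     (\<forall>\<epsilon>>0. \<exists>\<delta>>0. \<forall>z\<in>S. norm (z - zb) < \<delta> \<longrightarrow> \<phi> z \<le> \<epsilon> * norm (z - zb))"

lemma reg_normal_iff_upper_little_o:
  "\<eta> \<in> reg_normal Q zb \<longleftrightarrow> zb \<in> Q \<and> upper_little_o (\<lambda>z. \<eta> \<bullet> (z - zb)) Q zb"
  by (simp add: reg_normal_def upper_little_o_def)

lemma upper_little_o_add:
  assumes "upper_little_o \<phi> S zb" and "upper_little_o \<psi> S zb"
  shows "upper_little_o (\<lambda>z. \<phi> z + \<psi> z) S zb"
  unfolding upper_little_o_def
proof (intro allI impI)
  fix \<epsilon> :: real
  assume "\<epsilon> > 0"
  then obtain \<delta>1 \<delta>2 where "\<delta>1 > 0" "\<delta>2 > 0"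
    and \<delta>1: "\<forall>z\<in>S. norm (z - zb) < \<delta>1 \<longrightarrow> \<phi> z \<le> \<epsilon> / 2 * norm (z - zb)"
    and \<delta>2: "\<forall>z\<in>S. norm (z - zb) < \<delta>2 \<longrightarrow> \<psi> z \<le> \<epsilon> / 2 * norm (z - zb)"
    using assms \<open>\<epsilon> > 0\<close> unfolding upper_little_o_def by (metis half_gt_zero)
  have "\<phi> z + \<psi> z \<le> \<epsilon> * norm (z - zb)" if "z \<in> S" "norm (z - zb) < min \<delta>1 \<delta>2" for z
  proof -
    have "\<phi> z \<le> \<epsilon> / 2 * norm (z - zb)" "\<psi> z \<le> \<epsilon> / 2 * norm (z - zb)"
      using \<delta>1 \<delta>2 that by auto
    then show ?thesis
      by linarith
  qed
  with \<open>\<delta>1 > 0\<close> \<open>\<delta>2 > 0\<close>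
  show "\<exists>\<delta>>0. \<forall>z\<in>S. norm (z - zb) < \<delta> \<longrightarrow> \<phi> z + \<psi> z \<le> \<epsilon> * norm (z - zb)"
    by (intro exI[of _ "min \<delta>1 \<delta>2"]) auto
qed

lemma calm_at_iff_eventually:
  "calm_at F zb \<longleftrightarrow> (\<exists>L>0. \<forall>\<^sub>F z in nhds zb. norm (F z - F zb) \<le> L * norm (z - zb))"
proof
  assume "calm_at F zb"
  then obtain U L where "open U" "zb \<in> U" "L > 0"
    and "\<forall>z\<in>U. norm (F z - F zb) \<le> L * norm (z - zb)"
    unfolding calm_at_def by blast
  then show "\<exists>L>0. \<forall>\<^sub>F z in nhds zb. norm (F z - F zb) \<le> L * norm (z - zb)"
    using eventually_nhds_in_open[OF \<open>open U\<close> \<open>zb \<in> U\<close>]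
    by (intro exI[of _ L]) (auto elim: eventually_mono)
next
  assume "\<exists>L>0. \<forall>\<^sub>F z in nhds zb. norm (F z - F zb) \<le> L * norm (z - zb)"
  then show "calm_at F zb"
    unfolding calm_at_def eventually_nhds by blast
qed

lemma calm_at_bounded_linear:
  assumes "bounded_linear f"
  shows "calm_at f z"
proof -
  obtain K where "K > 0" and K: "\<And>d. norm (f d) \<le> norm d * K"
    using bounded_linear.pos_bounded[OF assms] by blast
  have "norm (f w - f z) \<le> K * norm (w - z)" for w
    using K[of "w - z"] by (simp add: linear_diff[OF bounded_linear.linear[OF assms]] mult.commute)
  with \<open>K > 0\<close> show ?thesis
    unfolding calm_at_iff_eventually by (auto intro: always_eventually)
qed

lemma calm_at_comp_fst:
  fixes y :: "'c::real_normed_vector"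
  assumes "calm_at g x"
  shows "calm_at (\<lambda>z. g (fst z)) (x, y)"
proof -
  obtain L where "L > 0" and "\<forall>\<^sub>F a in nhds x. norm (g a - g x) \<le> L * norm (a - x)"
    using assms unfolding calm_at_iff_eventually by blast
  then have "\<forall>\<^sub>F z in nhds (x, y). norm (g (fst z) - g x) \<le> L * norm (fst z - x)"
    using eventually_compose_filterlim tendsto_fst[OF filterlim_ident, of "(x, y)"] by auto
  moreover have "norm (fst z - x) \<le> norm (z - (x, y))" for z :: "'a \<times> 'c"
    using norm_fst_le[of "fst z - x" "snd z - y"] by (cases z) simp
  ultimately have "\<forall>\<^sub>F z in nhds (x, y). norm (g (fst z) - g x) \<le> L * norm (z - (x, y))"
    using \<open>L > 0\<close> by (elim eventually_mono) (meson mult_left_mono less_imp_le order_trans)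
  with \<open>L > 0\<close> show ?thesis
    unfolding calm_at_iff_eventually by auto
qed

lemma calm_at_dominated:
  assumes "calm_at f zb" and "calm_at h zb"
    and "\<And>z. norm (F z - F zb) \<le> norm (f z - f zb) + norm (h z - h zb)"
  shows "calm_at F zb"
proof -
  obtain L1 L2 where "L1 > 0" "L2 > 0"
    and f: "\<forall>\<^sub>F z in nhds zb. norm (f z - f zb) \<le> L1 * norm (z - zb)"
    and h: "\<forall>\<^sub>F z in nhds zb. norm (h z - h zb) \<le> L2 * norm (z - zb)"
    using assms(1,2) unfolding calm_at_iff_eventually by blast
  from f h have "\<forall>\<^sub>F z in nhds zb. norm (F z - F zb) \<le> (L1 + L2) * norm (z - zb)"
  proof eventually_elim
    case (elim z)
    then show ?case
      using assms(3)[of z] unfolding distrib_right by linarith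
  qed
  with \<open>L1 > 0\<close> \<open>L2 > 0\<close> show ?thesis
    unfolding calm_at_iff_eventually by (intro exI[of _ "L1 + L2"]) auto
qed

lemma calm_at_Pair:
  assumes "calm_at f zb" and "calm_at h zb"
  shows "calm_at (\<lambda>z. (f z, h z)) zb"
  using assms by (rule calm_at_dominated) (metis diff_Pair norm_Pair_le)

lemma calm_at_diff:
  assumes "calm_at f zb" and "calm_at h zb"
  shows "calm_at (\<lambda>z. f z - h z) zb"
proof (rule calm_at_dominated[OF assms])
  fix z
  have "(f z - h z) - (f zb - h zb) = (f z - f zb) - (h z - h zb)"
    by (simp add: algebra_simps)
  then show "norm ((f z - h z) - (f zb - h zb)) \<le> norm (f z - f zb) + norm (h z - h zb)"
    by (metis norm_triangle_ineq4)
qed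

lemma upper_little_o_compose:
  assumes \<phi>: "upper_little_o \<phi> Q (F zb)" and F: "calm_at F zb" "F ` S \<subseteq> Q"
  shows "upper_little_o (\<lambda>z. \<phi> (F z)) S zb"
  unfolding upper_little_o_def
proof (intro allI impI)
  fix \<epsilon> :: real
  assume "\<epsilon> > 0"
  obtain L r where "L > 0" "r > 0"
    and FL: "\<And>z. norm (z - zb) < r \<Longrightarrow> norm (F z - F zb) \<le> L * norm (z - zb)"
    using F(1) unfolding calm_at_iff_eventually eventually_nhds_metric dist_norm by blast
  obtain \<delta> where "\<delta> > 0"
    and \<delta>: "\<forall>w\<in>Q. norm (w - F zb) < \<delta> \<longrightarrow> \<phi> w \<le> \<epsilon> / L * norm (w - F zb)"
    using \<phi> \<open>\<epsilon> > 0\<close> \<open>L > 0\<close> unfolding upper_little_o_def by (meson divide_pos_pos)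
  have "\<phi> (F z) \<le> \<epsilon> * norm (z - zb)"
    if "z \<in> S" and z: "norm (z - zb) < min r (\<delta> / L)" for z
  proof -
    have FzL: "norm (F z - F zb) \<le> L * norm (z - zb)"
      using FL z by simp
    moreover have "L * norm (z - zb) < \<delta>"
      using z \<open>L > 0\<close> by (simp add: field_simps)
    ultimately have "\<phi> (F z) \<le> \<epsilon> / L * norm (F z - F zb)"
      using \<delta> F(2) \<open>z \<in> S\<close> by auto
    also have "\<dots> \<le> \<epsilon> / L * (L * norm (z - zb))"
      using FzL \<open>\<epsilon> > 0\<close> \<open>L > 0\<close> by (intro mult_left_mono) auto
    finally show ?thesis
      using \<open>L > 0\<close> by simp
  qed
  then show "\<exists>\<delta>>0. \<forall>z\<in>S. norm (z - zb) < \<delta> \<longrightarrow> \<phi> (F z) \<le> \<epsilon> * norm (z - zb)"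
    using \<open>r > 0\<close> \<open>\<delta> > 0\<close> \<open>L > 0\<close> by (intro exI[of _ "min r (\<delta> / L)"]) auto
qed

lemma reg_normal_gph_diff_imp:
  fixes g :: "'a::euclidean_space \<Rightarrow> 'b::euclidean_space"
  assumes \<Phi>: "\<And>x. \<Phi> x = (\<lambda>d. g x - d) ` D"
    and e: "(e1, e2) \<in> reg_normal (gph \<Phi>) (p, q)"
  shows "- e2 \<in> reg_normal D (g p - q)"
    and "(e1, e2) \<in> reg_normal (gph (sv g)) (p, g p)"
proof -
  have mem: "(a, b) \<in> gph \<Phi> \<longleftrightarrow> g a - b \<in> D" for a b
    by (rule mem_gph_diff_iff[OF \<Phi>])
  have "g p - q \<in> D" and small: "upper_little_o (\<lambda>z. (e1, e2) \<bullet> (z - (p, q))) (gph \<Phi>) (p, q)"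
    using e mem by (auto simp: reg_normal_iff_upper_little_o)
  have isometry: "calm_at F zb" if "\<And>z. norm (F z - F zb) = norm (z - zb)"
    for F :: "'c::real_normed_vector \<Rightarrow> 'a \<times> 'b" and zb
    unfolding calm_at_def using that by (intro exI[of _ UNIV] exI[of _ 1]) auto
  have "upper_little_o (\<lambda>d. (e1, e2) \<bullet> ((p, g p - d) - (p, q))) D (g p - q)"
  proof (rule upper_little_o_compose[where F = "\<lambda>d. (p, g p - d)"])
    show "upper_little_o (\<lambda>z. (e1, e2) \<bullet> (z - (p, q))) (gph \<Phi>) (p, g p - (g p - q))"
      using small by simp
    show "calm_at (\<lambda>d. (p, g p - d)) (g p - q)"
      using norm_minus_cancel[of "g p - d - q" for d] by (intro isometry) (simp add: algebra_simps)
    show "(\<lambda>d. (p, g p - d)) ` D \<subseteq> gph \<Phi>"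
      using mem by auto
  qed
  moreover have "(e1, e2) \<bullet> ((p, g p - d) - (p, q)) = - e2 \<bullet> (d - (g p - q))" for d
    by (simp add: inner_diff_right)
  ultimately show "- e2 \<in> reg_normal D (g p - q)"
    using \<open>g p - q \<in> D\<close> by (simp add: reg_normal_iff_upper_little_o)
  have "upper_little_o (\<lambda>z. (e1, e2) \<bullet> ((z - (0, g p - q)) - (p, q))) (gph (sv g)) (p, g p)"
  proof (rule upper_little_o_compose[where F = "\<lambda>z. z - (0, g p - q)"])
    show "upper_little_o (\<lambda>z. (e1, e2) \<bullet> (z - (p, q))) (gph \<Phi>) ((p, g p) - (0, g p - q))"
      using small by simp
    show "calm_at (\<lambda>z. z - (0, g p - q)) (p, g p)"
      by (rule isometry) (simp add: prod_eq_iff algebra_simps)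
    show "(\<lambda>z. z - (0, g p - q)) ` gph (sv g) \<subseteq> gph \<Phi>"
      using mem \<open>g p - q \<in> D\<close> by (auto simp: mem_gph_sv_iff)
  qed
  then show "(e1, e2) \<in> reg_normal (gph (sv g)) (p, g p)"
    by (simp add: reg_normal_iff_upper_little_o mem_gph_sv_iff algebra_simps)
qed

lemma reg_normal_gph_diff_if_calm:
  fixes g :: "'a::euclidean_space \<Rightarrow> 'b::euclidean_space"
  assumes \<Phi>: "\<And>x. \<Phi> x = (\<lambda>d. g x - d) ` D"
    and calm: "calm_at g p"
    and D_normal: "- e2 \<in> reg_normal D (g p - q)"
    and G_normal: "(e1, e2) \<in> reg_normal (gph (sv g)) (p, g p)"
  shows "(e1, e2) \<in> reg_normal (gph \<Phi>) (p, q)"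
proof -
  have mem: "(a, b) \<in> gph \<Phi> \<longleftrightarrow> g a - b \<in> D" for a b
    by (rule mem_gph_diff_iff[OF \<Phi>])
  let ?F1 = "\<lambda>z. (fst z, g (fst z))" and ?F2 = "\<lambda>z. g (fst z) - snd z"
  have calm1: "calm_at ?F1 (p, q)"
    by (rule calm_at_Pair[OF calm_at_bounded_linear[OF bounded_linear_fst] calm_at_comp_fst[OF calm]])
  have calm2: "calm_at ?F2 (p, q)"
    by (rule calm_at_diff[OF calm_at_comp_fst[OF calm] calm_at_bounded_linear[OF bounded_linear_snd]])
  have "g p - q \<in> D"
    using D_normal by (simp add: reg_normal_def)
  have "upper_little_o (\<lambda>z. (e1, e2) \<bullet> (?F1 z - (p, g p)) + - e2 \<bullet> (?F2 z - (g p - q)))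
      (gph \<Phi>) (p, q)"
  proof (rule upper_little_o_add)
    show "upper_little_o (\<lambda>z. (e1, e2) \<bullet> (?F1 z - (p, g p))) (gph \<Phi>) (p, q)"
      using G_normal
      by (intro upper_little_o_compose[where \<phi> = "\<lambda>w. (e1, e2) \<bullet> (w - (p, g p))", OF _ calm1])
        (auto simp: reg_normal_iff_upper_little_o mem_gph_sv_iff)
    show "upper_little_o (\<lambda>z. - e2 \<bullet> (?F2 z - (g p - q))) (gph \<Phi>) (p, q)"
      using D_normal mem
      by (intro upper_little_o_compose[where \<phi> = "\<lambda>w. - e2 \<bullet> (w - (g p - q))", OF _ calm2])
        (auto simp: reg_normal_iff_upper_little_o)
  qed
  moreover have "(e1, e2) \<bullet> (?F1 z - (p, g p)) + - e2 \<bullet> (?F2 z - (g p - q))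
      = (e1, e2) \<bullet> (z - (p, q))" for z
    by (cases z) (simp add: inner_diff_right)
  ultimately show ?thesis
    using \<open>g p - q \<in> D\<close> mem by (simp add: reg_normal_iff_upper_little_o)
qed

lemma lim_normal_gph_diff_imp:
  fixes g :: "'a::euclidean_space \<Rightarrow> 'b::euclidean_space"
  assumes \<Phi>: "\<And>x. \<Phi> x = (\<lambda>d. g x - d) ` D"
    and cont: "isCont g p"
    and e: "(e1, e2) \<in> lim_normal (gph \<Phi>) (p, q)"
  shows "- e2 \<in> lim_normal D (g p - q)"
    and "(e1, e2) \<in> lim_normal (gph (sv g)) (p, g p)"
proof -
  have mem: "(a, b) \<in> gph \<Phi> \<longleftrightarrow> g a - b \<in> D" for a b
    by (rule mem_gph_diff_iff[OF \<Phi>])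
  obtain z e where "(p, q) \<in> gph \<Phi>" and z: "\<And>k. z k \<in> gph \<Phi>"
    and e_reg: "\<And>k. e k \<in> reg_normal (gph \<Phi>) (z k)"
    and "z \<longlonglongrightarrow> (p, q)" and "e \<longlonglongrightarrow> (e1, e2)"
    using e unfolding lim_normal_def by blast
  define pk where "pk k = fst (z k)" for k
  define qk where "qk k = snd (z k)" for k
  have "pk \<longlonglongrightarrow> p" "qk \<longlonglongrightarrow> q"
    using tendsto_fst[OF \<open>z \<longlonglongrightarrow> (p, q)\<close>] tendsto_snd[OF \<open>z \<longlonglongrightarrow> (p, q)\<close>]
    by (simp_all add: pk_def[abs_def] qk_def[abs_def])
  then have gpk: "(\<lambda>k. g (pk k)) \<longlonglongrightarrow> g p"
    using cont isCont_tendsto_compose by blast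
  have e_split: "e k = (fst (e k), snd (e k))" and z_split: "z k = (pk k, qk k)" for k
    by (simp_all add: pk_def qk_def)
  have "(fst (e k), snd (e k)) \<in> reg_normal (gph \<Phi>) (pk k, qk k)" for k
    using e_reg[of k] by (simp flip: e_split z_split)
  note D_reg = reg_normal_gph_diff_imp(1)[OF \<Phi> this]
    and G_reg = reg_normal_gph_diff_imp(2)[OF \<Phi> this, unfolded prod.collapse]
  have "(\<lambda>k. g (pk k) - qk k) \<longlonglongrightarrow> g p - q" "(\<lambda>k. - snd (e k)) \<longlonglongrightarrow> - e2"
    using gpk \<open>qk \<longlonglongrightarrow> q\<close> tendsto_snd[OF \<open>e \<longlonglongrightarrow> (e1, e2)\<close>]
    by (auto intro: tendsto_diff tendsto_minus)
  moreover have "g (pk k) - qk k \<in> D" for k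
    using z[of k] mem by (simp add: z_split)
  moreover have "g p - q \<in> D"
    using \<open>(p, q) \<in> gph \<Phi>\<close> mem by blast
  ultimately show "- e2 \<in> lim_normal D (g p - q)"
    using D_reg unfolding lim_normal_def
    by (intro CollectI conjI exI[of _ "\<lambda>k. g (pk k) - qk k"] exI[of _ "\<lambda>k. - snd (e k)"]) auto
  have "(\<lambda>k. (pk k, g (pk k))) \<longlonglongrightarrow> (p, g p)"
    using \<open>pk \<longlonglongrightarrow> p\<close> gpk by (rule tendsto_Pair)
  with \<open>e \<longlonglongrightarrow> (e1, e2)\<close> G_reg
  show "(e1, e2) \<in> lim_normal (gph (sv g)) (p, g p)"
    unfolding lim_normal_def
    by (intro CollectI conjI exI[of _ "\<lambda>k. (pk k, g (pk k))"] exI[of _ e]) (auto simp: mem_gph_sv_iff)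
qed

lemma calm_at_difference_quotients_Bseq:
  fixes g :: "'a::real_normed_vector \<Rightarrow> 'b::real_normed_vector"
  assumes calm: "calm_at g x" and u: "uk \<longlonglongrightarrow> u"
    and t: "\<And>k. t k > 0" "t \<longlonglongrightarrow> 0"
  shows "Bseq (\<lambda>k. (g (x + t k *\<^sub>R uk k) - g x) /\<^sub>R t k)"
proof -
  obtain L where "L > 0" and L: "\<forall>\<^sub>F z in nhds x. norm (g z - g x) \<le> L * norm (z - x)"
    using calm unfolding calm_at_iff_eventually by blast
  have "(\<lambda>k. x + t k *\<^sub>R uk k) \<longlonglongrightarrow> x"
    using tendsto_add[OF tendsto_const tendsto_scaleR[OF t(2) u], of x] by simp
  from eventually_compose_filterlim[OF L this]
  have "\<forall>\<^sub>F k in sequentially.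
      norm ((g (x + t k *\<^sub>R uk k) - g x) /\<^sub>R t k) \<le> norm (L *\<^sub>R uk k)"
  proof eventually_elim
    case (elim k)
    have "norm ((g (x + t k *\<^sub>R uk k) - g x) /\<^sub>R t k) = norm (g (x + t k *\<^sub>R uk k) - g x) / t k"
      unfolding norm_scaleR using t(1)[of k] by (simp add: field_simps)
    also have "\<dots> \<le> L * norm (uk k)"
      using elim t(1)[of k] by (simp add: divide_le_eq algebra_simps)
    finally show ?case
      using \<open>L > 0\<close> by simp
  qed
  moreover have "Bseq (\<lambda>k. L *\<^sub>R uk k)"
    using tendsto_scaleR[OF tendsto_const u, of L] by (intro convergent_imp_Bseq convergentI)
  ultimately show ?thesis
    by (rule Bseq_eventually_mono)
qed

lemma graph_deriv_if_difference_quotients_tendsto: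
  assumes t: "\<And>k. t k > 0" "t \<longlonglongrightarrow> 0" and u: "uk \<longlonglongrightarrow> u"
    and w: "(\<lambda>k. (g (x + t k *\<^sub>R uk k) - g x) /\<^sub>R t k) \<longlonglongrightarrow> w"
  shows "w \<in> graph_deriv g x u"
proof -
  have "(x, g x) + t k *\<^sub>R (uk k, (g (x + t k *\<^sub>R uk k) - g x) /\<^sub>R t k) \<in> gph (sv g)" for k
    using t(1)[of k] by (simp add: mem_gph_sv_iff)
  moreover have "(\<lambda>k. (uk k, (g (x + t k *\<^sub>R uk k) - g x) /\<^sub>R t k)) \<longlonglongrightarrow> (u, w)"
    using u w by (rule tendsto_Pair)
  ultimately show ?thesis
    unfolding graph_deriv_def tangent_cone_def using t by blast
qed

lemma dir_normal_gph_diff_imp: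
  fixes g :: "'a::euclidean_space \<Rightarrow> 'b::euclidean_space"
  assumes \<Phi>: "\<And>x. \<Phi> x = (\<lambda>d. g x - d) ` D"
    and calm: "calm_at g p"
    and e: "(e1, e2) \<in> dir_normal (gph \<Phi>) (p, q) (u, v)"
  obtains w where "w \<in> graph_deriv g p u"
    and "- e2 \<in> dir_normal D (g p - q) (w - v)"
    and "(e1, e2) \<in> dir_normal (gph (sv g)) (p, g p) (u, w)"
proof -
  obtain ws t e where ws: "ws \<longlonglongrightarrow> (u, v)" and t: "\<And>k. t k > 0" "t \<longlonglongrightarrow> 0"
    and "e \<longlonglongrightarrow> (e1, e2)" and e_reg: "\<And>k. e k \<in> reg_normal (gph \<Phi>) ((p, q) + t k *\<^sub>R ws k)"
    using e unfolding dir_normal_def by blast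
  define uk where "uk k = fst (ws k)" for k
  define vk where "vk k = snd (ws k)" for k
  define wk where "wk k = (g (p + t k *\<^sub>R uk k) - g p) /\<^sub>R t k" for k
  have "uk \<longlonglongrightarrow> u" "vk \<longlonglongrightarrow> v"
    using tendsto_fst[OF ws] tendsto_snd[OF ws] by (simp_all add: uk_def[abs_def] vk_def[abs_def])
  have scaled: "g (p + t k *\<^sub>R uk k) = g p + t k *\<^sub>R wk k" for k
    using t(1)[of k] by (simp add: wk_def)
  have "(fst (e k), snd (e k)) \<in> reg_normal (gph \<Phi>) (p + t k *\<^sub>R uk k, q + t k *\<^sub>R vk k)" for k
  proof -
    have "(p, q) + t k *\<^sub>R ws k = (p + t k *\<^sub>R uk k, q + t k *\<^sub>R vk k)"
      by (simp add: prod_eq_iff uk_def vk_def)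
    with e_reg[of k] show ?thesis
      by simp
  qed
  note D_reg = reg_normal_gph_diff_imp(1)[OF \<Phi> this]
    and G_reg = reg_normal_gph_diff_imp(2)[OF \<Phi> this, unfolded prod.collapse]
  have D_reg': "- snd (e k) \<in> reg_normal D ((g p - q) + t k *\<^sub>R (wk k - vk k))" for k
    using D_reg[of k] by (simp add: scaled algebra_simps)
  have G_reg': "e k \<in> reg_normal (gph (sv g)) ((p, g p) + t k *\<^sub>R (uk k, wk k))" for k
    using G_reg[of k] by (simp add: scaled)
  have "bounded (range wk)"
    using calm_at_difference_quotients_Bseq[OF calm \<open>uk \<longlonglongrightarrow> u\<close> t]
    by (simp add: wk_def[abs_def] Bseq_eq_bounded)
  then obtain w s where s: "strict_mono s" and "(wk \<circ> s) \<longlonglongrightarrow> w"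
    using bounded_imp_convergent_subsequence by blast
  have sub: "X \<longlonglongrightarrow> l \<Longrightarrow> (\<lambda>k. X (s k)) \<longlonglongrightarrow> l" for X :: "nat \<Rightarrow> 'c::topological_space" and l
    using LIMSEQ_subseq_LIMSEQ[OF _ s] by (simp add: comp_def)
  have w: "(\<lambda>k. wk (s k)) \<longlonglongrightarrow> w"
    using \<open>(wk \<circ> s) \<longlonglongrightarrow> w\<close> by (simp add: comp_def)
  have ts: "\<And>k. t (s k) > 0" "(\<lambda>k. t (s k)) \<longlonglongrightarrow> 0"
    using t sub by auto
  show thesis
  proof
    show "w \<in> graph_deriv g p u"
      using ts sub[OF \<open>uk \<longlonglongrightarrow> u\<close>] w unfolding wk_def
      by (rule graph_deriv_if_difference_quotients_tendsto)
    show "- e2 \<in> dir_normal D (g p - q) (w - v)"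
      unfolding dir_normal_def
      using ts D_reg' tendsto_diff[OF w sub[OF \<open>vk \<longlonglongrightarrow> v\<close>]]
        tendsto_minus[OF tendsto_snd[OF sub[OF \<open>e \<longlonglongrightarrow> (e1, e2)\<close>]]]
      by (intro CollectI exI[of _ "\<lambda>k. wk (s k) - vk (s k)"] exI[of _ "\<lambda>k. t (s k)"]
          exI[of _ "\<lambda>k. - snd (e (s k))"]) auto
    show "(e1, e2) \<in> dir_normal (gph (sv g)) (p, g p) (u, w)"
      unfolding dir_normal_def
      using ts G_reg' tendsto_Pair[OF sub[OF \<open>uk \<longlonglongrightarrow> u\<close>] w] sub[OF \<open>e \<longlonglongrightarrow> (e1, e2)\<close>]
      by (intro CollectI exI[of _ "\<lambda>k. (uk (s k), wk (s k))"] exI[of _ "\<lambda>k. t (s k)"]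
          exI[of _ "\<lambda>k. e (s k)"]) auto
  qed
qed

theorem mainTheorem1:
  fixes g :: "'a::euclidean_space \<Rightarrow> 'b::euclidean_space"
    and D :: "'b set" and \<Phi> :: "'a \<Rightarrow> 'b set" and x :: 'a and y :: 'b
  assumes "continuous_on UNIV g"
    and "D \<noteq> {}" and "closed D"
    and "\<And>x. \<Phi> x = (\<lambda>d. g x - d) ` D"
    and "(x, y) \<in> gph \<Phi>"
  shows "(\<forall>ys. reg_coderiv \<Phi> x y ys \<subseteq>
              (if ys \<in> reg_normal D (g x - y) then reg_coderiv (sv g) x (g x) ys else {}))
       \<and> (calm_at g x \<longrightarrow> (\<forall>ys.
              (if ys \<in> reg_normal D (g x - y) then reg_coderiv (sv g) x (g x) ys else {})
                \<subseteq> reg_coderiv \<Phi> x y ys))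
       \<and> (\<forall>ys. lim_coderiv \<Phi> x y ys \<subseteq>
              (if ys \<in> lim_normal D (g x - y) then lim_coderiv (sv g) x (g x) ys else {}))
       \<and> (calm_at g x \<longrightarrow> (\<forall>u v ys. dir_coderiv \<Phi> x y u v ys \<subseteq>
              (\<Union>w \<in> {w. w \<in> graph_deriv g x u \<and> ys \<in> dir_normal D (g x - y) (w - v)}.
                  dir_coderiv (sv g) x (g x) u w ys)))"
proof (intro conjI allI impI subsetI)
  fix ys xs
  assume "xs \<in> reg_coderiv \<Phi> x y ys"
  then have "(xs, - ys) \<in> reg_normal (gph \<Phi>) (x, y)"
    by (simp add: reg_coderiv_def)
  from reg_normal_gph_diff_imp[OF assms(4) this]
  show "xs \<in> (if ys \<in> reg_normal D (g x - y) then reg_coderiv (sv g) x (g x) ys else {})"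
    by (simp add: reg_coderiv_def)
next
  fix ys xs
  assume calm: "calm_at g x"
    and "xs \<in> (if ys \<in> reg_normal D (g x - y) then reg_coderiv (sv g) x (g x) ys else {})"
  then have "- (- ys) \<in> reg_normal D (g x - y)"
    and "(xs, - ys) \<in> reg_normal (gph (sv g)) (x, g x)"
    by (simp_all add: reg_coderiv_def split: if_splits)
  from reg_normal_gph_diff_if_calm[OF assms(4) calm this]
  show "xs \<in> reg_coderiv \<Phi> x y ys"
    by (simp add: reg_coderiv_def)
next
  fix ys xs
  assume "xs \<in> lim_coderiv \<Phi> x y ys"
  then have H: "(xs, - ys) \<in> lim_normal (gph \<Phi>) (x, y)"
    by (simp add: lim_coderiv_def)
  have "isCont g x"
    using assms(1) by (simp add: continuous_on_eq_continuous_at)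
  from lim_normal_gph_diff_imp[OF assms(4) this H]
  show "xs \<in> (if ys \<in> lim_normal D (g x - y) then lim_coderiv (sv g) x (g x) ys else {})"
    by (simp add: lim_coderiv_def)
next
  fix u v ys xs
  assume calm: "calm_at g x" and "xs \<in> dir_coderiv \<Phi> x y u v ys"
  then have "(xs, - ys) \<in> dir_normal (gph \<Phi>) (x, y) (u, v)"
    by (simp add: dir_coderiv_def)
  then obtain w where "w \<in> graph_deriv g x u" "- (- ys) \<in> dir_normal D (g x - y) (w - v)"
    and "(xs, - ys) \<in> dir_normal (gph (sv g)) (x, g x) (u, w)"
    by (rule dir_normal_gph_diff_imp[OF assms(4) calm])
  then show "xs \<in> (\<Union>w \<in> {w. w \<in> graph_deriv g x u \<and> ys \<in> dir_normal D (g x - y) (w - v)}.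
                  dir_coderiv (sv g) x (g x) u w ys)"
    by (auto simp: dir_coderiv_def)
qed

end
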